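(* Let $(\hat\xi,\hat\tau)$ be a maximizer of $\mathrm E_n[\log\{1+\mathcal F(\xi+q(\cdot;\tau))\}]$ over $\xi\in\mathbb R$, $\tau\in\Theta_\tau$ (restricted to parameters for which $1+\mathcal F(\xi+q(\cdot;\tau))(x^{(i)},a^{(i)})>0$ for all $i$), assumed to exist, and define $$\hat c=\mathrm E_n\Big[\frac{1}{1+\mathcal F(\hat\xi+q(\cdot;\hat\tau))}\Big],\qquad \hat\beta_{\mathrm{emp}}=\mathrm E_n\Big[\frac{\hat c^{-1}\,w\,r}{1+\mathcal F(\hat\xi+q(\cdot;\hat\tau))}\Big].$$ Then (1-boundedness) $0\le\hat\beta_{\mathrm{emp}}\le R_{\max}$; and (stability) if, conditionally on $\mathcal D_{x,a}=\{(x^{(i)},a^{(i)})\}_{i=1}^n$, the rewards $r^{(1)},\dots,r^{(n)}$ are independent with $\mathrm{var}(r^{(i)}\mid\mathcal D_{x,a})\le\sigma^2$ for all $i$, then $\mathrm{var}(\hat\beta_{\mathrm{emp}}\mid\mathcal D_{x,a})\le\sigma^2$.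
   Context: Contextual bandit setting. $\mathcal A$ is a finite action set. The data are $n$ i.i.d. triples $(x^{(i)},a^{(i)},r^{(i)})$, each distributed as $(x,a,r)$ where $x\sim P_0$, $a\mid x\sim\pi_b(\cdot\mid x)$ and $r\mid(x,a)\sim P_r(x,a)$ with $r\in[0,R_{\max}]$. $\pi_e$ is the evaluation policy, overlap holds, and $w=w(x,a)=\pi_e(a|x)/\pi_b(a|x)$ is bounded. $\mathrm E_n[f]=n^{-1}\sum_{i=1}^n f(x^{(i)},a^{(i)},r^{(i)})$. For $m:\mathcal X\times\mathcal A\to\mathbb R$, $\mathcal F(m)(x,a)=w(x,a)m(x,a)-\sum_{a'\in\mathcal A}m(x,a')\pi_e(a'|x)$; note $\mathcal F(\xi+q)=\xi(w-1)+\mathcal F(q)$ for a constant $\xi$. A Q-function model $q(x,a;\tau)$, $\tau\in\Theta_\tau$, with $|q|\le R_{\max}$. *)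

theory Defs
  imports "HOL-Probability.Probability"
begin

definition iw :: "('x \<Rightarrow> 'a \<Rightarrow> real) \<Rightarrow> ('x \<Rightarrow> 'a \<Rightarrow> real) \<Rightarrow> 'x \<Rightarrow> 'a \<Rightarrow> real" where
  "iw pe pb x a = pe x a / pb x a"

definition Fop :: "'a set \<Rightarrow> ('x \<Rightarrow> 'a \<Rightarrow> real) \<Rightarrow> ('x \<Rightarrow> 'a \<Rightarrow> real)
                  \<Rightarrow> ('x \<Rightarrow> 'a \<Rightarrow> real) \<Rightarrow> 'x \<Rightarrow> 'a \<Rightarrow> real" where
  "Fop A pe pb m x a = iw pe pb x a * m x a - (\<Sum>a'\<in>A. m x a' * pe x a')"

definition En :: "nat \<Rightarrow> (nat \<Rightarrow> real) \<Rightarrow> real" where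
  "En n f = (\<Sum>i<n. f i) / real n"

definition denom :: "'a set \<Rightarrow> ('x \<Rightarrow> 'a \<Rightarrow> real) \<Rightarrow> ('x \<Rightarrow> 'a \<Rightarrow> real)
      \<Rightarrow> ('x \<Rightarrow> 'a \<Rightarrow> 't \<Rightarrow> real) \<Rightarrow> (nat \<Rightarrow> 'x) \<Rightarrow> (nat \<Rightarrow> 'a) \<Rightarrow> real \<Rightarrow> 't \<Rightarrow> nat \<Rightarrow> real" where
  "denom A pe pb q xs as \<xi> \<tau> i = 1 + Fop A pe pb (\<lambda>x a. \<xi> + q x a \<tau>) (xs i) (as i)"

definition feasible where
  "feasible A pe pb q xs as n \<xi> \<tau> \<longleftrightarrow> (\<forall>i<n. denom A pe pb q xs as \<xi> \<tau> i > 0)"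

definition obj where
  "obj A pe pb q xs as n \<xi> \<tau> = En n (\<lambda>i. ln (denom A pe pb q xs as \<xi> \<tau> i))"

definition is_maximizer where
  "is_maximizer A pe pb q \<Theta> xs as n \<xi>h \<tau>h \<longleftrightarrow>
     \<tau>h \<in> \<Theta> \<and> feasible A pe pb q xs as n \<xi>h \<tau>h \<and>
     (\<forall>\<xi>. \<forall>\<tau>\<in>\<Theta>. feasible A pe pb q xs as n \<xi> \<tau> \<longrightarrow>
        obj A pe pb q xs as n \<xi> \<tau> \<le> obj A pe pb q xs as n \<xi>h \<tau>h)"

definition chat where
  "chat A pe pb q xs as n \<xi>h \<tau>h = En n (\<lambda>i. 1 / denom A pe pb q xs as \<xi>h \<tau>h i)"

definition beta_emp where
  "beta_emp A pe pb q xs as n \<xi>h \<tau>h r =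
     En n (\<lambda>i. inverse (chat A pe pb q xs as n \<xi>h \<tau>h) * iw pe pb (xs i) (as i) * r i
                / denom A pe pb q xs as \<xi>h \<tau>h i)"

text \<open>Variance, literally as in the library's prob_space abbreviation.\<close>
definition var_of :: "'w measure \<Rightarrow> ('w \<Rightarrow> real) \<Rightarrow> real" where
  "var_of M X = integral\<^sup>L M (\<lambda>\<omega>. (X \<omega> - integral\<^sup>L M X)\<^sup>2)"

end

theory Submission imports Defs begin

text \<open>Since pi_e sums to one, F(xi + q) = xi (w - 1) + F(q), so the objective is a sum of
  logarithms of affine functions of the shift xi. Stationarity in xi at the maximizer reads
  E_n[w / (1 + F)] = E_n[1 / (1 + F)] = c-hat; hence beta-hat_emp = sum_i c_i r_i with nonnegative
  weights c_i = w_i / (n c-hat (1 + F)_i) summing to one. A convex combination of rewards in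
  [0, R_max] lies in [0, R_max], and for independent rewards
  var beta-hat_emp = sum_i c_i^2 var r_i <= sum_i c_i sigma^2 = sigma^2.\<close>

lemma convex_combination_le:
  fixes c r :: "'i \<Rightarrow> real"
  assumes "\<And>i. i \<in> I \<Longrightarrow> 0 \<le> c i" and "(\<Sum>i\<in>I. c i) = 1"
    and "\<And>i. i \<in> I \<Longrightarrow> r i \<le> B"
  shows "(\<Sum>i\<in>I. c i * r i) \<le> B"
proof -
  have "(\<Sum>i\<in>I. c i * r i) \<le> (\<Sum>i\<in>I. c i * B)"
    using assms by (intro sum_mono mult_left_mono) auto
  also have "\<dots> = B"
    using assms(2) by (simp add: sum_distrib_right[symmetric])
  finally show ?thesis .
qed

lemma convex_combination_squares_le:
  fixes c v :: "'i \<Rightarrow> real"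
  assumes c_nonneg: "\<And>i. i \<in> I \<Longrightarrow> 0 \<le> c i" and c_sum: "(\<Sum>i\<in>I. c i) = 1"
    and v: "\<And>i. i \<in> I \<Longrightarrow> 0 \<le> v i \<and> v i \<le> B"
  shows "(\<Sum>i\<in>I. (c i)\<^sup>2 * v i) \<le> B"
proof (cases "finite I")
  case True
  have "c i \<le> 1" if "i \<in> I" for i
  proof -
    have "c i \<le> (\<Sum>j\<in>I. c j)"
      by (rule member_le_sum) (use that c_nonneg True in auto)
    then show ?thesis using c_sum by simp
  qed
  then have "(c i)\<^sup>2 * v i \<le> c i * v i" if "i \<in> I" for i
    using c_nonneg[OF that] v[OF that] that
    by (simp add: power2_eq_square mult_right_le_one_le mult_right_mono)
  then have "(\<Sum>i\<in>I. (c i)\<^sup>2 * v i) \<le> (\<Sum>i\<in>I. c i * v i)"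
    by (rule sum_mono)
  also have "\<dots> \<le> B"
    using c_nonneg c_sum v by (intro convex_combination_le) auto
  finally show ?thesis .
next
  case False
  then show ?thesis using c_sum by simp
qed

context prob_space
begin

lemma expectation_centered_product_indep:
  fixes X :: "'i \<Rightarrow> 'a \<Rightarrow> real"
  assumes indep: "indep_vars (\<lambda>_. borel) X I"
    and "i \<in> I" "j \<in> I" "i \<noteq> j"
    and int: "\<And>k. k \<in> I \<Longrightarrow> integrable M (X k)"
  shows "expectation (\<lambda>\<omega>. (X i \<omega> - expectation (X i)) * (X j \<omega> - expectation (X j))) = 0"
proof -
  define Y where "Y k \<omega> = X k \<omega> - expectation (X k)" for k \<omega>
  have "indep_vars (\<lambda>_. borel) Y I"
    unfolding Y_def[abs_def]
    by (rule indep_vars_compose2[OF indep, where Y="\<lambda>k x. x - expectation (X k)" and N="\<lambda>_. borel", simplified])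
      measurable
  then have "indep_vars (\<lambda>_. borel) Y {i, j}"
    by (rule indep_vars_subset) (use assms in auto)
  moreover have "integrable M (Y k)" if "k \<in> I" for k
    using int[OF that] unfolding Y_def by simp
  ultimately have "expectation (\<lambda>\<omega>. \<Prod>k\<in>{i, j}. Y k \<omega>) = (\<Prod>k\<in>{i, j}. expectation (Y k))"
    by (intro indep_vars_lebesgue_integral) (use assms in auto)
  moreover have "expectation (Y k) = 0" if "k \<in> I" for k
    using int[OF that] by (simp add: Y_def[abs_def] prob_space)
  ultimately show ?thesis
    using assms by (simp add: Y_def)
qed

lemma variance_weighted_sum_indep:
  fixes X :: "'i \<Rightarrow> 'a \<Rightarrow> real"
  assumes fin: "finite I" and indep: "indep_vars (\<lambda>_. borel) X I"
    and square_int: "\<And>i. i \<in> I \<Longrightarrow> integrable M (\<lambda>\<omega>. (X i \<omega>)\<^sup>2)"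
  shows "variance (\<lambda>\<omega>. \<Sum>i\<in>I. c i * X i \<omega>) = (\<Sum>i\<in>I. (c i)\<^sup>2 * variance (X i))"
proof -
  define Y where "Y i \<omega> = X i \<omega> - expectation (X i)" for i \<omega>
  have meas: "X i \<in> borel_measurable M" if "i \<in> I" for i
    using indep that unfolding indep_vars_def by auto
  have int: "integrable M (X i)" if "i \<in> I" for i
    using square_integrable_imp_integrable[OF meas square_int] that by auto
  have int_Y_square: "integrable M (\<lambda>\<omega>. (Y i \<omega>)\<^sup>2)" if "i \<in> I" for i
    using square_int[OF that] int[OF that]
    unfolding Y_def power2_eq_square ring_distribs by (intro Bochner_Integration.integrable_diff) auto
  have int_YY: "integrable M (\<lambda>\<omega>. Y i \<omega> * Y j \<omega>)" if "i \<in> I" "j \<in> I" for i j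
  proof (rule Bochner_Integration.integrable_bound)
    show "integrable M (\<lambda>\<omega>. (Y i \<omega>)\<^sup>2 + (Y j \<omega>)\<^sup>2)"
      using int_Y_square that by auto
    show "(\<lambda>\<omega>. Y i \<omega> * Y j \<omega>) \<in> borel_measurable M"
      using meas that unfolding Y_def by measurable
    have "\<bar>a * b\<bar> \<le> a\<^sup>2 + b\<^sup>2" for a b :: real
      using sum_squares_bound[of a b] sum_squares_bound[of a "-b"] by (simp add: abs_if)
    then show "AE \<omega> in M. norm (Y i \<omega> * Y j \<omega>) \<le> norm ((Y i \<omega>)\<^sup>2 + (Y j \<omega>)\<^sup>2)"
      by auto
  qed
  have cross: "expectation (\<lambda>\<omega>. Y i \<omega> * Y j \<omega>) = (if i = j then variance (X i) else 0)"
    if "i \<in> I" "j \<in> I" for i j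
    using expectation_centered_product_indep[OF indep that _ int]
    by (auto simp: Y_def power2_eq_square)
  have mean: "expectation (\<lambda>\<omega>. \<Sum>i\<in>I. c i * X i \<omega>) = (\<Sum>i\<in>I. c i * expectation (X i))"
    using int by (simp add: Bochner_Integration.integral_sum)
  have "variance (\<lambda>\<omega>. \<Sum>i\<in>I. c i * X i \<omega>)
      = expectation (\<lambda>\<omega>. \<Sum>i\<in>I. \<Sum>j\<in>I. c i * c j * (Y i \<omega> * Y j \<omega>))"
    unfolding mean
    by (rule Bochner_Integration.integral_cong[OF refl])
      (simp add: Y_def power2_eq_square sum_product mult_ac
        flip: sum_subtractf right_diff_distrib)
  also have "\<dots> = (\<Sum>i\<in>I. \<Sum>j\<in>I. c i * c j * expectation (\<lambda>\<omega>. Y i \<omega> * Y j \<omega>))"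
    using int_YY by (simp add: Bochner_Integration.integral_sum integrable_sum)
  also have "\<dots> = (\<Sum>i\<in>I. (c i)\<^sup>2 * variance (X i))"
  proof (rule sum.cong[OF refl])
    fix i assume "i \<in> I"
    then have "(\<Sum>j\<in>I. c i * c j * expectation (\<lambda>\<omega>. Y i \<omega> * Y j \<omega>)) =
        (\<Sum>j\<in>I. if i = j then (c i)\<^sup>2 * variance (X i) else 0)"
      by (intro sum.cong) (auto simp: cross power2_eq_square)
    then show "(\<Sum>j\<in>I. c i * c j * expectation (\<lambda>\<omega>. Y i \<omega> * Y j \<omega>)) =
        (c i)\<^sup>2 * variance (X i)"
      using fin \<open>i \<in> I\<close> by simp
  qed
  finally show ?thesis .
qed

end

lemma ln_sum_max_stationary:
  fixes a b :: "'i \<Rightarrow> real"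
  assumes fin: "finite I" and pos: "\<And>i. i \<in> I \<Longrightarrow> 0 < a i + t * b i"
    and max: "\<And>s. (\<And>i. i \<in> I \<Longrightarrow> 0 < a i + s * b i) \<Longrightarrow>
      (\<Sum>i\<in>I. ln (a i + s * b i)) \<le> (\<Sum>i\<in>I. ln (a i + t * b i))"
  shows "(\<Sum>i\<in>I. b i / (a i + t * b i)) = 0"
proof -
  have deriv: "((\<lambda>s. \<Sum>i\<in>I. ln (a i + s * b i)) has_real_derivative
      (\<Sum>i\<in>I. b i / (a i + t * b i))) (at t)"
    using pos by (auto intro!: DERIV_sum derivative_eq_intros simp: field_simps)
  have "\<forall>\<^sub>F s in nhds t. \<forall>i\<in>I. 0 < a i + s * b i"
  proof (rule eventually_ball_finite[OF fin], intro ballI)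
    fix i assume "i \<in> I"
    have "((\<lambda>s. a i + s * b i) \<longlongrightarrow> a i + t * b i) (nhds t)"
      by (intro tendsto_intros) (simp add: filterlim_ident)
    then show "\<forall>\<^sub>F s in nhds t. 0 < a i + s * b i"
      using pos[OF \<open>i \<in> I\<close>] by (rule order_tendstoD)
  qed
  then obtain d where "d > 0" and near: "\<And>s. dist s t < d \<Longrightarrow> \<forall>i\<in>I. 0 < a i + s * b i"
    unfolding eventually_nhds_metric by blast
  have "\<forall>s. \<bar>t - s\<bar> < d \<longrightarrow> (\<Sum>i\<in>I. ln (a i + s * b i)) \<le> (\<Sum>i\<in>I. ln (a i + t * b i))"
    using near by (auto intro!: max simp: dist_real_def abs_minus_commute)
  with deriv \<open>d > 0\<close> show ?thesis
    by (rule DERIV_local_max)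
qed

lemma denom_affine_in_shift:
  assumes "(\<Sum>a\<in>A. pe (xs i) a) = 1"
  shows "denom A pe pb q xs as \<xi> \<tau> i =
    (1 + Fop A pe pb (\<lambda>x a. q x a \<tau>) (xs i) (as i)) + \<xi> * (iw pe pb (xs i) (as i) - 1)"
proof -
  have "(\<Sum>a'\<in>A. (\<xi> + q (xs i) a' \<tau>) * pe (xs i) a') =
      \<xi> * (\<Sum>a\<in>A. pe (xs i) a) + (\<Sum>a'\<in>A. q (xs i) a' \<tau> * pe (xs i) a')"
    by (simp add: distrib_right sum.distrib sum_distrib_left)
  then show ?thesis
    using assms unfolding denom_def Fop_def by (simp add: algebra_simps)
qed

lemma is_maximizer_stationary:
  assumes pe_sum: "\<And>x. (\<Sum>a\<in>A. pe x a) = 1" and "n > 0"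
    and maxi: "is_maximizer A pe pb q \<Theta> xs as n \<xi>h \<tau>h"
  shows "(\<Sum>i<n. (iw pe pb (xs i) (as i) - 1) / denom A pe pb q xs as \<xi>h \<tau>h i) = 0"
proof -
  define a where "a i = 1 + Fop A pe pb (\<lambda>x a. q x a \<tau>h) (xs i) (as i)" for i
  define b where "b i = iw pe pb (xs i) (as i) - 1" for i
  have denom_eq: "denom A pe pb q xs as \<xi> \<tau>h i = a i + \<xi> * b i" for \<xi> i
    unfolding a_def b_def by (rule denom_affine_in_shift[OF pe_sum])
  have feasible_iff: "feasible A pe pb q xs as n \<xi> \<tau>h \<longleftrightarrow> (\<forall>i\<in>{..<n}. 0 < a i + \<xi> * b i)" for \<xi>
    unfolding feasible_def denom_eq by auto
  have obj_eq: "obj A pe pb q xs as n \<xi> \<tau>h = (\<Sum>i\<in>{..<n}. ln (a i + \<xi> * b i)) / real n" for \<xi>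
    unfolding obj_def En_def denom_eq ..
  have "(\<Sum>i\<in>{..<n}. b i / (a i + \<xi>h * b i)) = 0"
  proof (rule ln_sum_max_stationary[OF finite_lessThan])
    show "\<And>i. i \<in> {..<n} \<Longrightarrow> 0 < a i + \<xi>h * b i"
      using maxi unfolding is_maximizer_def feasible_iff by auto
    fix s assume "\<And>i. i \<in> {..<n} \<Longrightarrow> 0 < a i + s * b i"
    then have "feasible A pe pb q xs as n s \<tau>h"
      unfolding feasible_iff by blast
    then have "obj A pe pb q xs as n s \<tau>h \<le> obj A pe pb q xs as n \<xi>h \<tau>h"
      using maxi unfolding is_maximizer_def by blast
    then show "(\<Sum>i\<in>{..<n}. ln (a i + s * b i)) \<le> (\<Sum>i\<in>{..<n}. ln (a i + \<xi>h * b i))"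
      using \<open>n > 0\<close> unfolding obj_eq by (simp add: divide_le_cancel)
  qed
  then show ?thesis
    unfolding denom_eq b_def by simp
qed

lemma beta_emp_convex_combination:
  assumes pe_dist: "\<And>x. (\<forall>a\<in>A. 0 \<le> pe x a) \<and> (\<Sum>a\<in>A. pe x a) = 1"
    and data: "\<And>i. i < n \<Longrightarrow> as i \<in> A \<and> pb (xs i) (as i) > 0"
    and "n > 0"
    and maxi: "is_maximizer A pe pb q \<Theta> xs as n \<xi>h \<tau>h"
  obtains c where "\<And>i. i < n \<Longrightarrow> 0 \<le> c i" and "(\<Sum>i<n. c i) = 1"
    and "\<And>r. beta_emp A pe pb q xs as n \<xi>h \<tau>h r = (\<Sum>i<n. c i * r i)"
proof
  define w where "w i = iw pe pb (xs i) (as i)" for i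
  define D where "D i = denom A pe pb q xs as \<xi>h \<tau>h i" for i
  define S where "S = (\<Sum>i<n. 1 / D i)"
  define c where "c i = w i / (D i * S)" for i
  have D_pos: "0 < D i" if "i < n" for i
    using maxi that unfolding is_maximizer_def feasible_def D_def by auto
  have w_nonneg: "0 \<le> w i" if "i < n" for i
    using data[OF that] pe_dist unfolding w_def iw_def by auto
  have S_pos: "0 < S"
    unfolding S_def using \<open>n > 0\<close> D_pos by (intro sum_pos) auto
  have "(\<Sum>i<n. (w i - 1) / D i) = 0"
    unfolding w_def D_def using is_maximizer_stationary[OF _ \<open>n > 0\<close> maxi] pe_dist by blast
  then have w_sum: "(\<Sum>i<n. w i / D i) = S"
    unfolding S_def by (simp add: diff_divide_distrib sum_subtractf)
  show "0 \<le> c i" if "i < n" for i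
    using w_nonneg[OF that] D_pos[OF that] S_pos unfolding c_def by simp
  have "(\<Sum>i<n. c i) = (\<Sum>i<n. w i / D i) / S"
    unfolding c_def by (simp add: sum_divide_distrib)
  then show "(\<Sum>i<n. c i) = 1"
    using w_sum S_pos by simp
  have chat: "chat A pe pb q xs as n \<xi>h \<tau>h = S / real n"
    unfolding chat_def En_def S_def D_def ..
  show "beta_emp A pe pb q xs as n \<xi>h \<tau>h r = (\<Sum>i<n. c i * r i)" for r
    unfolding beta_emp_def En_def chat sum_divide_distrib
    by (rule sum.cong[OF refl])
      (use \<open>n > 0\<close> S_pos D_pos in \<open>auto simp: c_def w_def D_def field_simps\<close>)
qed

theorem lemma1:
  fixes A :: "'a set"
    and pe pb :: "'x \<Rightarrow> 'a \<Rightarrow> real"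
    and q :: "'x \<Rightarrow> 'a \<Rightarrow> 't \<Rightarrow> real"
    and \<Theta> :: "'t set"
    and xs :: "nat \<Rightarrow> 'x" and as :: "nat \<Rightarrow> 'a"
    and n :: nat and Rmax \<xi>h :: real and \<tau>h :: 't
  assumes finA: "finite A"
    and pe_dist: "\<And>x. (\<forall>a\<in>A. 0 \<le> pe x a) \<and> (\<Sum>a\<in>A. pe x a) = 1"
    and pb_dist: "\<And>x. (\<forall>a\<in>A. 0 \<le> pb x a) \<and> (\<Sum>a\<in>A. pb x a) = 1"
    and overlap: "\<And>x a. a \<in> A \<Longrightarrow> pe x a > 0 \<Longrightarrow> pb x a > 0"
    and w_bdd: "\<exists>B. \<forall>x. \<forall>a\<in>A. pb x a > 0 \<longrightarrow> iw pe pb x a \<le> B"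
    and q_bdd: "\<And>x a \<tau>. a \<in> A \<Longrightarrow> \<tau> \<in> \<Theta> \<Longrightarrow> \<bar>q x a \<tau>\<bar> \<le> Rmax"
    and n_pos: "n > 0"
    and data: "\<And>i. i < n \<Longrightarrow> as i \<in> A \<and> pb (xs i) (as i) > 0"
    and maxi: "is_maximizer A pe pb q \<Theta> xs as n \<xi>h \<tau>h"
  shows "(\<forall>r. (\<forall>i<n. 0 \<le> r i \<and> r i \<le> Rmax) \<longrightarrow>
            0 \<le> beta_emp A pe pb q xs as n \<xi>h \<tau>h r \<and>
            beta_emp A pe pb q xs as n \<xi>h \<tau>h r \<le> Rmax)
       \<and> (\<forall>(M :: 'w measure) (R :: nat \<Rightarrow> 'w \<Rightarrow> real) (\<sigma> :: real).
            prob_space M \<and>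
            (\<forall>i<n. R i \<in> borel_measurable M \<and> (\<forall>\<omega>\<in>space M. 0 \<le> R i \<omega> \<and> R i \<omega> \<le> Rmax)) \<and>
            prob_space.indep_vars M (\<lambda>_. borel) R {..<n} \<and>
            (\<forall>i<n. var_of M (R i) \<le> \<sigma>\<^sup>2)
            \<longrightarrow> var_of M (\<lambda>\<omega>. beta_emp A pe pb q xs as n \<xi>h \<tau>h (\<lambda>i. R i \<omega>)) \<le> \<sigma>\<^sup>2)"
proof -
  obtain c where c_nonneg: "\<And>i. i < n \<Longrightarrow> 0 \<le> c i" and c_sum: "(\<Sum>i<n. c i) = 1"
    and beta: "\<And>r. beta_emp A pe pb q xs as n \<xi>h \<tau>h r = (\<Sum>i<n. c i * r i)"
    using beta_emp_convex_combination[OF pe_dist data n_pos maxi] by blast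
  show ?thesis
  proof (intro conjI allI impI)
    fix r :: "nat \<Rightarrow> real" assume r: "\<forall>i<n. 0 \<le> r i \<and> r i \<le> Rmax"
    show "0 \<le> beta_emp A pe pb q xs as n \<xi>h \<tau>h r"
      unfolding beta using r c_nonneg by (intro sum_nonneg) auto
    show "beta_emp A pe pb q xs as n \<xi>h \<tau>h r \<le> Rmax"
      unfolding beta using c_nonneg c_sum r by (intro convex_combination_le) auto
  next
    fix M :: "'w measure" and R :: "nat \<Rightarrow> 'w \<Rightarrow> real" and \<sigma> :: real
    assume H: "prob_space M \<and>
      (\<forall>i<n. R i \<in> borel_measurable M \<and> (\<forall>\<omega>\<in>space M. 0 \<le> R i \<omega> \<and> R i \<omega> \<le> Rmax)) \<and>
      prob_space.indep_vars M (\<lambda>_. borel) R {..<n} \<and> (\<forall>i<n. var_of M (R i) \<le> \<sigma>\<^sup>2)"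
    interpret prob_space M using H by blast
    have "integrable M (\<lambda>\<omega>. (R i \<omega>)\<^sup>2)" if "i < n" for i
      using H that by (intro integrable_const_bound[where B="Rmax\<^sup>2"]) (auto intro: power_mono)
    then have "variance (\<lambda>\<omega>. \<Sum>i<n. c i * R i \<omega>) = (\<Sum>i<n. (c i)\<^sup>2 * variance (R i))"
      using H by (intro variance_weighted_sum_indep) auto
    also have "\<dots> \<le> \<sigma>\<^sup>2"
      using c_nonneg c_sum H by (intro convex_combination_squares_le) (auto simp: var_of_def)
    finally show "var_of M (\<lambda>\<omega>. beta_emp A pe pb q xs as n \<xi>h \<tau>h (\<lambda>i. R i \<omega>)) \<le> \<sigma>\<^sup>2"
      unfolding var_of_def beta .
  qed
qed

end
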